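(* Let $v\equiv 9\pmod{18}$ and let $(\mathbb{Z}_v,\mathcal{B})$ be a cyclic $\mathrm{STS}(v)$ (with cyclic automorphism $i\mapsto i+1 \bmod v$). Then $\mathcal{B}$ has a full orbit of Type $3$.
   Context: A Steiner triple system $\mathrm{STS}(v)$ is a pair $(X,\mathcal{B})$ with $|X|=v$ and $\mathcal{B}$ a collection of 3-subsets of $X$ such that every 2-subset lies in exactly one block. It is cyclic if (after relabeling) $X=\mathbb{Z}_v$ and the map $\alpha: i\mapsto i+1 \pmod v$ maps blocks to blocks. The blocks are then partitioned into orbits under the group generated by $\alpha$; an orbit with $v$ blocks is a full orbit. For $v\equiv 3\pmod 6$ there is, besides full orbits, exactly one short orbit, namely the orbit of $\{0,v/3,2v/3\}$, of size $v/3$. When $3\mid v$, an orbit is of Type $i$ ($i=1,2,3$) if every block in it contains elements of exactly $i$ distinct residue classes modulo $3$ (this is the same for all blocks of an orbit). *)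

theory Defs
  imports Main
begin

text \<open>Points of Z_v are represented by the naturals 0..<v; blocks are 3-subsets.\<close>

definition is_STS :: "nat \<Rightarrow> nat set set \<Rightarrow> bool" where
  "is_STS v \<B> \<longleftrightarrow>
     (\<forall>B\<in>\<B>. B \<subseteq> {0..<v} \<and> card B = 3) \<and>
     (\<forall>P. P \<subseteq> {0..<v} \<and> card P = 2 \<longrightarrow> (\<exists>!B. B \<in> \<B> \<and> P \<subseteq> B))"

definition shift :: "nat \<Rightarrow> nat \<Rightarrow> nat set \<Rightarrow> nat set" where
  "shift v k B = (\<lambda>i. (i + k) mod v) ` B"

definition is_cyclic_STS :: "nat \<Rightarrow> nat set set \<Rightarrow> bool" where
  "is_cyclic_STS v \<B> \<longleftrightarrow> is_STS v \<B> \<and> (\<forall>B\<in>\<B>. shift v 1 B \<in> \<B>)"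

definition block_orbit :: "nat \<Rightarrow> nat set \<Rightarrow> nat set set" where
  "block_orbit v B = {shift v k B | k. k < v}"

definition full_orbit :: "nat \<Rightarrow> nat set \<Rightarrow> bool" where
  "full_orbit v B \<longleftrightarrow> card (block_orbit v B) = v"

text \<open>Type i: the block meets exactly i residue classes mod 3 (invariant on the orbit when 3 divides v).\<close>
definition block_type :: "nat set \<Rightarrow> nat" where
  "block_type B = card ((\<lambda>x. x mod 3) ` B)"

end

theory Submission
  imports Defs "HOL-Number_Theory.Cong"
begin

text \<open>Count the pairs (x, y) with x \<equiv> 0 and y \<equiv> 1 (mod 3). When v \<equiv> 3 (mod 6) there are
  (v/3)^2 of them, an odd number. Each such pair lies in exactly one block, and a block
  containing i points \<equiv> 0 and j points \<equiv> 1 accounts for i j of them; as i + j \<le> 3, the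
  product i j is odd only for i = j = 1, i.e. for a block of Type 3. So a Type-3 block exists.
  Its translates are pairwise distinct when 9 divides v: a translation by d fixing a block
  preserves the sum of its points mod v, so v divides 3 d, hence 3 divides d; but then the
  translation preserves residues mod 3, which are distinct on a Type-3 block, so it fixes
  every point and v divides d.\<close>

lemma card_residue_class:
  assumes "i < 3"
  shows "card {x\<in>{0..<3 * a}. x mod 3 = i} = a"
proof -
  have "{x\<in>{0..<3 * a}. x mod 3 = i} = (\<lambda>k. 3 * k + i) ` {0..<a}"
  proof (intro set_eqI iffI)
    fix x assume "x \<in> {x\<in>{0..<3 * a}. x mod 3 = i}"
    then have "x = 3 * (x div 3) + i" "x div 3 < a" by auto
    then show "x \<in> (\<lambda>k. 3 * k + i) ` {0..<a}" by force
  qed (use assms in auto)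
  moreover have "inj_on (\<lambda>k. 3 * k + i) {0..<a}" by (auto simp: inj_on_def)
  ultimately show ?thesis by (simp add: card_image)
qed

lemma STS_card_pairs:
  assumes "is_STS v \<B>" and "X \<subseteq> {0..<v}" "Y \<subseteq> {0..<v}" "X \<inter> Y = {}"
  shows "card (X \<times> Y) = (\<Sum>B\<in>\<B>. card (B \<inter> X) * card (B \<inter> Y))"
proof -
  have blk: "\<And>B. B \<in> \<B> \<Longrightarrow> B \<subseteq> {0..<v}"
    and uniq: "\<And>P. P \<subseteq> {0..<v} \<Longrightarrow> card P = 2 \<Longrightarrow> \<exists>!B. B \<in> \<B> \<and> P \<subseteq> B"
    using assms(1) unfolding is_STS_def by auto
  have pair: "\<exists>!B. B \<in> \<B> \<and> {x, y} \<subseteq> B" if "x \<in> X" "y \<in> Y" for x y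
  proof (rule uniq)
    show "{x, y} \<subseteq> {0..<v}" using that assms(2,3) by auto
    have "x \<noteq> y" using that assms(4) by blast
    then show "card {x, y} = 2" by simp
  qed
  have "\<B> \<subseteq> Pow {0..<v}" using blk by blast
  then have "finite \<B>" by (rule finite_subset) simp
  moreover have "\<forall>B\<in>\<B>. finite ((B \<inter> X) \<times> (B \<inter> Y))"
    using blk by (blast intro: finite_cartesian_product finite_subset[OF _ finite_atLeastLessThan])
  moreover have "\<forall>B\<in>\<B>. \<forall>B'\<in>\<B>. B \<noteq> B' \<longrightarrow> ((B \<inter> X) \<times> (B \<inter> Y)) \<inter> ((B' \<inter> X) \<times> (B' \<inter> Y)) = {}"
  proof (intro ballI impI equals0I)
    fix B B' z
    assume "B \<in> \<B>" "B' \<in> \<B>" "B \<noteq> B'"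
      and "z \<in> ((B \<inter> X) \<times> (B \<inter> Y)) \<inter> ((B' \<inter> X) \<times> (B' \<inter> Y))"
    then obtain x y where "x \<in> X" "y \<in> Y" "{x, y} \<subseteq> B" "{x, y} \<subseteq> B'"
      by (cases z) blast
    then show False using pair[of x y] \<open>B \<noteq> B'\<close> \<open>B \<in> \<B>\<close> \<open>B' \<in> \<B>\<close> by blast
  qed
  ultimately have "card (\<Union>B\<in>\<B>. (B \<inter> X) \<times> (B \<inter> Y)) = (\<Sum>B\<in>\<B>. card ((B \<inter> X) \<times> (B \<inter> Y)))"
    by (rule card_UN_disjoint)
  moreover have "(\<Union>B\<in>\<B>. (B \<inter> X) \<times> (B \<inter> Y)) = X \<times> Y"
    using pair by (fastforce dest: ex1_implies_ex)
  ultimately show ?thesis by (simp add: card_cartesian_product)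
qed

lemma block_type_3_if_odd:
  assumes "card B = 3"
    and "odd (card {x\<in>B. x mod 3 = 0} * card {x\<in>B. x mod 3 = 1})"
  shows "block_type B = 3"
proof -
  let ?C = "\<lambda>i::nat. {x\<in>B. x mod 3 = i}"
  have "finite B" using assms(1) card.infinite by fastforce
  have "card B = card ((?C 0 \<union> ?C 1) \<union> ?C 2)" by (rule arg_cong[where f = card]) auto
  also have "\<dots> = card (?C 0) + card (?C 1) + card (?C 2)"
    using \<open>finite B\<close> by (simp add: card_Un_disjoint disjoint_iff)
  finally have "card (?C 0) + card (?C 1) + card (?C 2) = 3" using assms(1) by simp
  moreover have "odd (card (?C 0))" "odd (card (?C 1))" using assms(2) by auto
  ultimately have "card (?C 0) = 1" "card (?C 1) = 1" "card (?C 2) = 1"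
    by presburger+
  then have "?C 0 \<noteq> {}" "?C 1 \<noteq> {}" "?C 2 \<noteq> {}" by (metis card.empty zero_neq_one)+
  then have "(\<lambda>x. x mod 3) ` B = {0, 1, 2}" by (auto simp: image_iff) (metis dvd_imp_mod_0, metis)
  then show ?thesis by (simp add: block_type_def)
qed

lemma STS_ex_block_type_3:
  assumes "is_STS v \<B>" and "v mod 6 = 3"
  shows "\<exists>B\<in>\<B>. block_type B = 3"
proof -
  define X where "X i = {x\<in>{0..<v}. x mod 3 = i}" for i :: nat
  have blk: "\<And>B. B \<in> \<B> \<Longrightarrow> B \<subseteq> {0..<v} \<and> card B = 3"
    using assms(1) unfolding is_STS_def by auto
  have "v = 3 * (v div 3)" "odd (v div 3)" using assms(2) by presburger+
  then have "card (X i) = v div 3" if "i < 3" for i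
    using card_residue_class[OF that, of "v div 3"] by (simp add: X_def)
  then have "odd (card (X 0 \<times> X 1))"
    using \<open>odd (v div 3)\<close> by (simp add: card_cartesian_product)
  moreover have "card (X 0 \<times> X 1) = (\<Sum>B\<in>\<B>. card (B \<inter> X 0) * card (B \<inter> X 1))"
    by (rule STS_card_pairs[OF assms(1)]) (auto simp: X_def)
  ultimately have "odd (\<Sum>B\<in>\<B>. card (B \<inter> X 0) * card (B \<inter> X 1))" by simp
  then obtain B where B: "B \<in> \<B>" "odd (card (B \<inter> X 0) * card (B \<inter> X 1))"
    by (meson dvd_sum)
  have "B \<inter> X i = {x\<in>B. x mod 3 = i}" for i
    using blk[OF B(1)] by (auto simp: X_def)
  then have "odd (card {x\<in>B. x mod 3 = 0} * card {x\<in>B. x mod 3 = 1})"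
    using B(2) by simp
  then have "block_type B = 3"
    using blk[OF B(1)] by (intro block_type_3_if_odd) simp_all
  with B(1) show ?thesis ..
qed

lemma shift_shift: "shift v a (shift v b B) = shift v (a + b) B"
  unfolding shift_def image_image by (simp add: mod_add_right_eq add.assoc add.commute add.left_commute)

lemma shift_add_modulus: "shift v (d + v) B = shift v d B"
  unfolding shift_def by (simp add: add.assoc[symmetric])

lemma shift_modulus:
  assumes "B \<subseteq> {0..<v}"
  shows "shift v v B = B"
proof -
  have "(\<lambda>i. (i + v) mod v) ` B = id ` B"
    using assms by (intro image_cong) auto
  then show ?thesis by (simp add: shift_def)
qed

lemma full_orbit_if_stabiliser_trivial:
  assumes "B \<subseteq> {0..<v}" and "\<And>d. shift v d B = B \<Longrightarrow> v dvd d"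
  shows "full_orbit v B"
proof -
  have neq: "shift v k B \<noteq> shift v l B" if "k < l" "l < v" for k l
  proof
    assume "shift v k B = shift v l B"
    then have "shift v (v - k) (shift v k B) = shift v (v - k) (shift v l B)" by simp
    then have "shift v (v - k + k) B = shift v (v - k + l) B"
      by (simp only: shift_shift)
    moreover have "v - k + k = v" "v - k + l = l - k + v" using that by auto
    ultimately have "shift v v B = shift v (l - k) B"
      by (simp only: shift_add_modulus)
    then have "shift v (l - k) B = B"
      using shift_modulus[OF assms(1)] by simp
    then have "v dvd l - k" by (rule assms(2))
    then show False using that by (simp add: nat_dvd_not_less)
  qed
  have "inj_on (\<lambda>k. shift v k B) {..<v}"
    by (rule inj_onI) (metis lessThan_iff linorder_cases neq)
  moreover have "block_orbit v B = (\<lambda>k. shift v k B) ` {..<v}"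
    unfolding block_orbit_def by auto
  ultimately show ?thesis by (simp add: full_orbit_def card_image)
qed

lemma shift_fixed_imp_dvd:
  assumes "B \<subseteq> {0..<v}" "finite B" and "shift v d B = B"
  shows "v dvd card B * d"
proof -
  define f where "f i = (i + d) mod v" for i
  have "inj_on f B"
  proof (rule inj_onI)
    fix x y assume "x \<in> B" "y \<in> B" "f x = f y"
    then have "[x + d = y + d] (mod v)" by (simp add: f_def cong_def)
    then have "[x = y] (mod v)" by (simp add: cong_add_rcancel_nat)
    then show "x = y" using \<open>x \<in> B\<close> \<open>y \<in> B\<close> assms(1) by (metis atLeastLessThan_iff cong_def mod_less subsetD)
  qed
  moreover have "f ` B = B" using assms(3) by (simp add: shift_def f_def)
  ultimately have "\<Sum>B = sum f B"
    using sum.reindex[of f B id] by simp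
  then have "\<Sum>B mod v = (\<Sum>i\<in>B. (i + d) mod v) mod v" by (simp add: f_def)
  also have "\<dots> = (\<Sum>B + card B * d) mod v"
    by (simp add: mod_sum_eq sum.distrib)
  finally have "[\<Sum>B + 0 = \<Sum>B + card B * d] (mod v)" by (simp add: cong_def)
  then have "[card B * d = 0] (mod v)"
    by (simp only: cong_add_lcancel_nat) (rule cong_sym)
  then show ?thesis by (simp add: cong_0_iff)
qed

lemma block_type_3_shift_fixed_imp_dvd:
  assumes "B \<subseteq> {0..<v}" "card B = 3" "block_type B = 3" "9 dvd v"
    and "shift v d B = B"
  shows "v dvd d"
proof -
  have "finite B" using assms(2) card.infinite by fastforce
  then have "v dvd 3 * d" using shift_fixed_imp_dvd[OF assms(1) _ assms(5)] assms(2) by simp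
  then have "3 * 3 dvd 3 * d" using assms(4) by (simp add: dvd_trans)
  then have "3 dvd d" by simp
  have "3 dvd v" using assms(4) by (simp add: dvd_trans[of 3 9])
  obtain x where x: "x \<in> B" using assms(2) by fastforce
  let ?y = "(x + d) mod v"
  have "?y \<in> B" using assms(5) x by (auto simp: shift_def)
  moreover have "?y mod 3 = x mod 3"
  proof -
    have "?y mod 3 = (x + d) mod 3" using \<open>3 dvd v\<close> by (rule mod_mod_cancel)
    also have "\<dots> = x mod 3" using \<open>3 dvd d\<close> by (auto elim!: dvdE)
    finally show ?thesis .
  qed
  moreover have "inj_on (\<lambda>x. x mod 3) B"
    using assms(2,3) \<open>finite B\<close> by (intro eq_card_imp_inj_on) (simp_all add: block_type_def)
  ultimately have "?y = x" using x by (metis inj_onD)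
  moreover have "x < v" using x assms(1) by auto
  ultimately have "(x + d) mod v = x mod v" by simp
  then have "[x + d = x + 0] (mod v)" by (simp add: cong_def)
  then show ?thesis by (simp only: cong_add_lcancel_nat cong_0_iff)
qed

theorem mainTheorem3:
  fixes v :: nat and \<B> :: "nat set set"
  assumes "v mod 18 = 9"
    and "is_cyclic_STS v \<B>"
  shows "\<exists>B\<in>\<B>. full_orbit v B \<and> block_type B = 3"
proof -
  have STS: "is_STS v \<B>" using assms(2) by (simp add: is_cyclic_STS_def)
  have "v mod 6 = 3" "9 dvd v" using assms(1) by presburger+
  then obtain B where B: "B \<in> \<B>" "block_type B = 3"
    using STS_ex_block_type_3[OF STS] by blast
  have sub: "B \<subseteq> {0..<v}" and card: "card B = 3"
    using STS B(1) unfolding is_STS_def by blast+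
  have "full_orbit v B"
    using block_type_3_shift_fixed_imp_dvd[OF sub card B(2) \<open>9 dvd v\<close>]
    by (rule full_orbit_if_stabiliser_trivial[OF sub])
  with B show ?thesis by blast
qed

end
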